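(* There is an absolute constant $C>0$ such that the following holds. Let $G(V,E)$ be a graph with nonnegative edge weights $w$, let $k\ge c\ge 2$ be integers, let $G^{(1)},\ldots,G^{(k)}$ be a random $k$-clustering of $G$ with expected multiplicity $c$, let $\pi$ be a permutation of $E$ in non-increasing order of weight, $M_i:=\mathsf{Greedy}(G^{(i)},\pi)$, and $H$ the graph on $V$ with edge set $\bigcup_i M_i$. Fix a maximum weight matching $M^*$ of $G$, and let $F_1\subseteq M^*$ be the set of edges $e\in M^*$ that are free for machine $1$ (no endpoint of $e$ is matched by $\mathsf{Greedy}(G^{(1)},\pi^{<e})$), and $F'_1:=F_1\cap E(H)$. Then $$\mathbb{E}[w(F'_1)] \geq \mathbb{E}[w(F_1)] - C\cdot\frac{\log c}{c}\cdot \mathrm{opt}(G).$$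
   Context: $\mathrm{opt}(G)$ is the weight of a maximum weight matching; $w(S)$ is the total weight of an edge set $S$. $\mathsf{Greedy}(G,\pi)$ scans the edges of $G$ in order $\pi$ and adds $(u,v)$ iff neither endpoint is matched; $\mathsf{Greedy}(G^{(1)},\pi^{<e})$ means running it on $G^{(1)}$ and stopping just before processing $e$. A random $k$-clustering with expected multiplicity $c$: independently for each edge $e$, draw $c_e\sim\mathrm{Bin}(k,c/k)$ and place $e$ in $c_e$ distinct uniformly random sets among $E^{(1)},\ldots,E^{(k)}$; $G^{(i)}=G(V,E^{(i)})$. Expectations are over the random clustering. *)

theory Defs
  imports "HOL-Probability.Probability"
begin

definition simple_graph :: "nat set \<Rightarrow> nat set set \<Rightarrow> bool" where
  "simple_graph V E \<longleftrightarrow> finite V \<and> (\<forall>e\<in>E. e \<subseteq> V \<and> card e = 2)"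

definition is_matching :: "nat set set \<Rightarrow> bool" where
  "is_matching M \<longleftrightarrow> (\<forall>e\<in>M. \<forall>f\<in>M. e \<noteq> f \<longrightarrow> e \<inter> f = {})"

definition wt :: "(nat set \<Rightarrow> real) \<Rightarrow> nat set set \<Rightarrow> real" where
  "wt w S = (\<Sum>e\<in>S. w e)"

definition opt :: "nat set set \<Rightarrow> (nat set \<Rightarrow> real) \<Rightarrow> real" where
  "opt E w = Max {wt w M | M. M \<subseteq> E \<and> is_matching M}"

definition greedy :: "nat set list \<Rightarrow> nat set set" where
  "greedy es = foldl (\<lambda>M e. if (\<forall>f\<in>M. e \<inter> f = {}) then insert e M else M) {} es"

text \<open>Edge set of machine i under a clustering assigning each edge a set of machines.\<close>
definition cluster_edges :: "nat set set \<Rightarrow> (nat set \<Rightarrow> nat set) \<Rightarrow> nat \<Rightarrow> nat set set" where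
  "cluster_edges E A i = {e\<in>E. i \<in> A e}"

definition greedy_machine :: "nat set set \<Rightarrow> (nat set \<Rightarrow> nat set) \<Rightarrow> nat \<Rightarrow> nat set list \<Rightarrow> nat set set" where
  "greedy_machine E A i \<pi> = greedy (filter (\<lambda>e. e \<in> cluster_edges E A i) \<pi>)"

text \<open>Per-edge distribution: c_e ~ Bin(k, c/k), then a uniformly random c_e-subset of the k machines
  (machines are indexed 0..k-1).\<close>
definition edge_clusters :: "nat \<Rightarrow> nat \<Rightarrow> nat set pmf" where
  "edge_clusters k c = binomial_pmf k (real c / real k) \<bind>
      (\<lambda>m. pmf_of_set {S. S \<subseteq> {..<k} \<and> card S = m})"

definition random_clustering :: "nat set set \<Rightarrow> nat \<Rightarrow> nat \<Rightarrow> (nat set \<Rightarrow> nat set) pmf" where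
  "random_clustering E k c = Pi_pmf E {} (\<lambda>e. edge_clusters k c)"

text \<open>F_1: edges of M* free for machine 1 (index 0): no endpoint matched by Greedy(G^(1), pi^{<e}).\<close>
definition free_edges :: "nat set set \<Rightarrow> nat set list \<Rightarrow> nat set set \<Rightarrow> (nat set \<Rightarrow> nat set) \<Rightarrow> nat set set" where
  "free_edges E \<pi> Mstar A =
     {e\<in>Mstar. \<forall>f\<in>greedy_machine E A 0 (takeWhile (\<lambda>x. x \<noteq> e) \<pi>). e \<inter> f = {}}"

definition H_edges :: "nat set set \<Rightarrow> nat \<Rightarrow> nat set list \<Rightarrow> (nat set \<Rightarrow> nat set) \<Rightarrow> nat set set" where
  "H_edges E k \<pi> A = (\<Union>i<k. greedy_machine E A i \<pi>)"

end

theory Submission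
  imports Defs
begin

(* Replace the clustering by independent Bernoulli(c/k) membership bits, one bit vector per
   machine. If an edge e of M* is free for machine 1 but missing from H, then on every machine
   e is absent or not free, since otherwise Greedy on that machine would take e. Whether e is
   free on a machine depends only on that machine's bits for edges scanned before e, hence not
   on its bit for e. With p the probability that e is free on one machine, the event therefore
   has probability at most p (1 - (c/k) p)^(k-1) <= p exp(-cp/2) <= 2/c. Summing over M*
   loses at most (2/c) opt(G), and 2/c <= (2/ln 2) ln c / c. *)

lemma pmf_bernoulli_subset:
  assumes A: "finite A" and p: "0 \<le> p" "p \<le> 1"
  shows "pmf (map_pmf (\<lambda>b. {x\<in>A. b x}) (Pi_pmf A False (\<lambda>_. bernoulli_pmf p))) S
       = (if S \<subseteq> A then p ^ card S * (1 - p) ^ (card A - card S) else 0)"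
proof (cases "S \<subseteq> A")
  case True
  let ?Q = "Pi_pmf A False (\<lambda>_. bernoulli_pmf p)"
  have "pmf (map_pmf (\<lambda>b. {x\<in>A. b x}) ?Q) S = measure_pmf.prob ?Q ((\<lambda>b. {x\<in>A. b x}) -` {S})"
    by (rule pmf_map)
  also have "\<dots> = measure_pmf.prob ?Q {\<lambda>x. x \<in> S}"
  proof (intro measure_prob_cong_0)
    fix b assume "b \<in> (\<lambda>b. {x\<in>A. b x}) -` {S} - {\<lambda>x. x \<in> S}"
    then have "\<exists>x. x \<notin> A \<and> b x \<noteq> False" by (auto simp: fun_eq_iff)
    then show "pmf ?Q b = 0" by (rule pmf_Pi_outside[OF A])
  qed (use True in auto)
  also have "\<dots> = (\<Prod>x\<in>A. pmf (bernoulli_pmf p) (x \<in> S))"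
    using A True by (auto simp: measure_pmf_single intro: pmf_Pi')
  also have "\<dots> = (\<Prod>x\<in>A. if x \<in> S then p else 1 - p)"
    using p by (intro prod.cong) auto
  also have "\<dots> = p ^ card S * (1 - p) ^ (card A - card S)"
    using A True by (simp add: prod.If_cases Int_absorb1 Diff_eq[symmetric] card_Diff_subset finite_subset)
  finally show ?thesis using True by simp
next
  case False
  then show ?thesis by (auto simp: pmf_eq_0_set_pmf)
qed

lemma pmf_binomial_uniform_subset:
  assumes A: "finite A" and p: "0 \<le> p" "p \<le> 1"
  shows "pmf (binomial_pmf (card A) p \<bind> (\<lambda>m. pmf_of_set {T. T \<subseteq> A \<and> card T = m})) S
       = (if S \<subseteq> A then p ^ card S * (1 - p) ^ (card A - card S) else 0)"
proof -
  define n where "n = card A"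
  have uniform: "pmf (pmf_of_set {T. T \<subseteq> A \<and> card T = m}) S
      = (if S \<subseteq> A \<and> card S = m then 1 / real (n choose m) else 0)" if "m \<le> n" for m
  proof -
    have fin: "finite {T. T \<subseteq> A \<and> card T = m}" using A by auto
    have card: "card {T. T \<subseteq> A \<and> card T = m} = n choose m"
      using n_subsets[OF A] unfolding n_def by simp
    then have "{T. T \<subseteq> A \<and> card T = m} \<noteq> {}" using that by (metis card.empty zero_less_binomial_iff less_irrefl)
    then show ?thesis using fin card by (auto simp: indicator_def)
  qed
  have "pmf (binomial_pmf n p \<bind> (\<lambda>m. pmf_of_set {T. T \<subseteq> A \<and> card T = m})) S
      = (\<integral>m. pmf (pmf_of_set {T. T \<subseteq> A \<and> card T = m}) S \<partial>binomial_pmf n p)"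
    by (rule pmf_bind)
  also have "\<dots> = (\<Sum>m\<in>{card S}. pmf (pmf_of_set {T. T \<subseteq> A \<and> card T = m}) S * pmf (binomial_pmf n p) m)"
  proof (intro integral_measure_pmf_real)
    fix m assume "m \<in> set_pmf (binomial_pmf n p)" "pmf (pmf_of_set {T. T \<subseteq> A \<and> card T = m}) S \<noteq> 0"
    then show "m \<in> {card S}" using p by (auto simp: uniform set_pmf_binomial_eq split: if_splits)
  qed simp
  also have "\<dots> = (if S \<subseteq> A then p ^ card S * (1 - p) ^ (n - card S) else 0)"
  proof (cases "S \<subseteq> A")
    case True
    then have "card S \<le> n" unfolding n_def using A by (rule card_mono[rotated])
    then show ?thesis using True p by (simp add: uniform)
  next
    case S: False
    show ?thesis
    proof (cases "card S \<le> n")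
      case True
      then show ?thesis using S by (simp add: uniform)
    qed (use S p in simp)
  qed
  finally show ?thesis unfolding n_def .
qed

lemma binomial_uniform_subset_eq_bernoulli_subset:
  assumes "finite A" "0 \<le> p" "p \<le> 1"
  shows "binomial_pmf (card A) p \<bind> (\<lambda>m. pmf_of_set {T. T \<subseteq> A \<and> card T = m})
       = map_pmf (\<lambda>b. {x\<in>A. b x}) (Pi_pmf A False (\<lambda>_. bernoulli_pmf p))"
  using assms by (intro pmf_eqI) (simp only: pmf_bernoulli_subset pmf_binomial_uniform_subset)

lemma pmf_Pi_pmf_Pi_pmf:
  assumes A: "finite A" and B: "finite B"
  shows "pmf (Pi_pmf A (\<lambda>_. d) (\<lambda>_. Pi_pmf B d (\<lambda>_. D))) f
       = (if \<forall>x y. x \<notin> A \<or> y \<notin> B \<longrightarrow> f x y = d then \<Prod>x\<in>A. \<Prod>y\<in>B. pmf D (f x y) else 0)"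
proof (cases "\<forall>x y. x \<notin> A \<or> y \<notin> B \<longrightarrow> f x y = d")
  case True
  have "pmf (Pi_pmf A (\<lambda>_. d) (\<lambda>_. Pi_pmf B d (\<lambda>_. D))) f = (\<Prod>x\<in>A. pmf (Pi_pmf B d (\<lambda>_. D)) (f x))"
    using True by (subst pmf_Pi'[OF A]) (auto simp: fun_eq_iff)
  also have "\<dots> = (\<Prod>x\<in>A. \<Prod>y\<in>B. pmf D (f x y))"
    using True by (intro prod.cong refl pmf_Pi'[OF B]) auto
  finally show ?thesis using True by simp
next
  case False
  then obtain x y where "x \<notin> A \<or> y \<notin> B" "f x y \<noteq> d" by blast
  then consider "x \<notin> A" "f x \<noteq> (\<lambda>_. d)" | "x \<in> A" "\<exists>y. y \<notin> B \<and> f x y \<noteq> d" by fastforce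
  then have "pmf (Pi_pmf A (\<lambda>_. d) (\<lambda>_. Pi_pmf B d (\<lambda>_. D))) f = 0"
  proof cases
    case 1
    then show ?thesis by (intro pmf_Pi_outside[OF A]) blast
  next
    case 2
    then have "pmf (Pi_pmf B d (\<lambda>_. D)) (f x) = 0" by (intro pmf_Pi_outside[OF B])
    then show ?thesis using A \<open>x \<in> A\<close> by (subst pmf_Pi) (auto intro: prod_zero)
  qed
  with False show ?thesis by (simp only: if_False)
qed

lemma Pi_pmf_Pi_pmf_swap:
  assumes "finite A" "finite B"
  shows "Pi_pmf A (\<lambda>_. d) (\<lambda>_. Pi_pmf B d (\<lambda>_. D))
       = map_pmf (\<lambda>g x y. g y x) (Pi_pmf B (\<lambda>_. d) (\<lambda>_. Pi_pmf A d (\<lambda>_. D)))"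
proof (rule pmf_eqI)
  fix f :: "'a \<Rightarrow> 'b \<Rightarrow> 'c"
  have inj: "inj (\<lambda>g x y. g y x)" by (auto simp: inj_def fun_eq_iff)
  have "pmf (Pi_pmf A (\<lambda>_. d) (\<lambda>_. Pi_pmf B d (\<lambda>_. D))) f
      = pmf (Pi_pmf B (\<lambda>_. d) (\<lambda>_. Pi_pmf A d (\<lambda>_. D))) (\<lambda>y x. f x y)"
    unfolding pmf_Pi_pmf_Pi_pmf[OF assms] pmf_Pi_pmf_Pi_pmf[OF assms(2,1)]
    by (subst prod.swap) meson
  also have "\<dots> = pmf (map_pmf (\<lambda>g x y. g y x) (Pi_pmf B (\<lambda>_. d) (\<lambda>_. Pi_pmf A d (\<lambda>_. D)))) f"
    using pmf_map_inj'[OF inj, of _ "\<lambda>y x. f x y"] by simp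
  finally show "pmf (Pi_pmf A (\<lambda>_. d) (\<lambda>_. Pi_pmf B d (\<lambda>_. D))) f = \<dots>" .
qed

lemma random_clustering_eq_bernoulli_machines:
  assumes "finite E" "c \<le> k"
  shows "random_clustering E k c = map_pmf (\<lambda>B e. {i\<in>{..<k}. B i e})
           (Pi_pmf {..<k} (\<lambda>_. False) (\<lambda>_. Pi_pmf E False (\<lambda>_. bernoulli_pmf (real c / real k))))"
proof -
  define q where "q = real c / real k"
  have q: "0 \<le> q" "q \<le> 1" using assms(2) unfolding q_def by (auto simp: divide_le_eq_1)
  define \<Phi> where "\<Phi> = (\<lambda>b::nat \<Rightarrow> bool. {i\<in>{..<k}. b i})"
  have "edge_clusters k c = map_pmf \<Phi> (Pi_pmf {..<k} False (\<lambda>_. bernoulli_pmf q))"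
    using binomial_uniform_subset_eq_bernoulli_subset[of "{..<k}" q] q
    unfolding edge_clusters_def q_def[symmetric] \<Phi>_def by simp
  then have "random_clustering E k c = Pi_pmf E {} (\<lambda>_. map_pmf \<Phi> (Pi_pmf {..<k} False (\<lambda>_. bernoulli_pmf q)))"
    unfolding random_clustering_def by simp
  also have "\<dots> = map_pmf ((\<circ>) \<Phi>) (Pi_pmf E (\<lambda>_. False) (\<lambda>_. Pi_pmf {..<k} False (\<lambda>_. bernoulli_pmf q)))"
    using assms(1) by (intro Pi_pmf_map) (auto simp: \<Phi>_def)
  also have "Pi_pmf E (\<lambda>_. False) (\<lambda>_. Pi_pmf {..<k} False (\<lambda>_. bernoulli_pmf q))
      = map_pmf (\<lambda>B e i. B i e) (Pi_pmf {..<k} (\<lambda>_. False) (\<lambda>_. Pi_pmf E False (\<lambda>_. bernoulli_pmf q)))"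
    using assms(1) by (intro Pi_pmf_Pi_pmf_swap) auto
  finally show ?thesis by (simp add: pmf.map_comp o_def \<Phi>_def q_def)
qed

lemma mult_exp_minus_le_one: "(y::real) * exp (- y) \<le> 1"
proof -
  have "y \<le> exp y" using exp_ge_add_one_self[of y] by linarith
  then have "y * exp (- y) \<le> exp y * exp (- y)" by (simp add: mult_right_mono)
  then show ?thesis by (simp add: exp_minus)
qed

lemma mult_one_minus_power_le_two_div:
  fixes p :: real and c k :: nat
  assumes p: "0 \<le> p" "p \<le> 1" and c: "2 \<le> c" "c \<le> k"
  shows "p * (1 - real c / real k * p) ^ (k - 1) \<le> 2 / real c"
proof -
  define q where "q = real c / real k"
  have q: "0 \<le> q" "q \<le> 1" using c unfolding q_def by auto
  have "real c / 2 \<le> real (k - 1) * q"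
    using c unfolding q_def by (simp add: of_nat_diff field_simps)
  then have exponent: "real c / 2 * p \<le> real (k - 1) * q * p"
    using p by (intro mult_right_mono)
  have "(1 - q * p) ^ (k - 1) \<le> exp (- (q * p)) ^ (k - 1)"
    using q p exp_ge_add_one_self[of "- (q * p)"] by (intro power_mono) (auto simp: mult_le_one)
  also have "\<dots> = exp (- (real (k - 1) * q * p))"
    by (simp add: exp_of_nat_mult[symmetric] mult_ac)
  also have "\<dots> \<le> exp (- (real c / 2 * p))"
    using exponent by simp
  finally have "p * (1 - q * p) ^ (k - 1) \<le> p * exp (- (real c / 2 * p))"
    using p by (intro mult_left_mono)
  also have "\<dots> = 2 / real c * ((real c / 2 * p) * exp (- (real c / 2 * p)))"
    using c by simp
  also have "\<dots> \<le> 2 / real c * 1"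
    by (intro mult_left_mono mult_exp_minus_le_one) simp
  finally show ?thesis unfolding q_def by simp
qed

lemma measure_pair_pmf_Times:
  "measure_pmf.prob (pair_pmf M N) (A \<times> B) = measure_pmf.prob M A * measure_pmf.prob N B"
proof -
  have "measure_pmf.prob (pair_pmf M N) (A \<times> B)
      = measure_pmf.prob (pair_pmf M N) ((A \<inter> set_pmf M) \<times> (B \<inter> set_pmf N))"
    by (metis measure_Int_set_pmf set_pair_pmf Times_Int_Times)
  also have "\<dots> = measure_pmf.prob M (A \<inter> set_pmf M) * measure_pmf.prob N (B \<inter> set_pmf N)"
    by (intro measure_pmf_prob_product) auto
  finally show ?thesis by (simp add: measure_Int_set_pmf)
qed

lemma prob_Pi_bernoulli_coordinate_and:
  assumes E: "finite E" "e \<in> E" and q: "0 \<le> q" "q \<le> 1"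
    and X: "\<And>b y. X (b(e := y)) = X b"
  shows "measure_pmf.prob (Pi_pmf E d (\<lambda>_. bernoulli_pmf q)) {b. b e \<and> X b}
       = q * measure_pmf.prob (Pi_pmf E d (\<lambda>_. bernoulli_pmf q)) {b. X b}"
proof -
  let ?R = "Pi_pmf (E - {e}) d (\<lambda>_. bernoulli_pmf q)"
  have split: "Pi_pmf E d (\<lambda>_. bernoulli_pmf q)
      = map_pmf (\<lambda>(y, f). f(e := y)) (pair_pmf (bernoulli_pmf q) ?R)"
    using Pi_pmf_insert[of "E - {e}" e d "\<lambda>_. bernoulli_pmf q"] E by (simp add: insert_absorb)
  have "measure_pmf.prob (Pi_pmf E d (\<lambda>_. bernoulli_pmf q)) {b. b e \<and> X b}
      = measure_pmf.prob (pair_pmf (bernoulli_pmf q) ?R) ({True} \<times> {f. X f})"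
    unfolding split using X by (auto intro: arg_cong[where f = "measure _"])
  also have "\<dots> = q * measure_pmf.prob ?R {f. X f}"
    using q by (simp add: measure_pair_pmf_Times measure_pmf_single)
  also have "measure_pmf.prob ?R {f. X f}
      = measure_pmf.prob (pair_pmf (bernoulli_pmf q) ?R) (UNIV \<times> {f. X f})"
    by (simp add: measure_pair_pmf_Times)
  also have "\<dots> = measure_pmf.prob (Pi_pmf E d (\<lambda>_. bernoulli_pmf q)) {b. X b}"
    unfolding split using X by (auto intro: arg_cong[where f = "measure _"])
  finally show ?thesis .
qed

lemma expectation_wt_eq_sum_prob:
  assumes "finite M" "\<And>A. S A \<subseteq> M"
  shows "measure_pmf.expectation R (\<lambda>A. wt w (S A)) = (\<Sum>e\<in>M. w e * measure_pmf.prob R {A. e \<in> S A})"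
proof -
  have "wt w (S A) = (\<Sum>e\<in>M. w e * indicator {A. e \<in> S A} A)" for A
    using assms sum.inter_restrict[OF assms(1), of w "S A"]
    unfolding wt_def by (simp add: indicator_def if_distrib Int_absorb1 cong: if_cong)
  then have "measure_pmf.expectation R (\<lambda>A. wt w (S A))
      = (\<Sum>e\<in>M. measure_pmf.expectation R (\<lambda>A. w e * indicator {A. e \<in> S A} A))"
    by (simp add: Bochner_Integration.integral_sum measure_pmf.emeasure_finite less_top[symmetric])
  then show ?thesis by simp
qed

definition greedy_step :: "nat set set \<Rightarrow> nat set \<Rightarrow> nat set set" where
  "greedy_step M e = (if \<forall>f\<in>M. e \<inter> f = {} then insert e M else M)"

lemma greedy_eq_foldl_greedy_step: "greedy es = foldl greedy_step {} es"
  unfolding greedy_def greedy_step_def ..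

lemma subset_foldl_greedy_step: "M \<subseteq> foldl greedy_step M es"
proof (induction es arbitrary: M)
  case (Cons e es)
  have "M \<subseteq> greedy_step M e" by (auto simp: greedy_step_def)
  also have "\<dots> \<subseteq> foldl greedy_step (greedy_step M e) es" by (rule Cons.IH)
  finally show ?case by simp
qed simp

definition free_for_greedy :: "(nat set \<Rightarrow> bool) \<Rightarrow> nat set list \<Rightarrow> nat set \<Rightarrow> bool" where
  "free_for_greedy P \<pi> e \<longleftrightarrow> (\<forall>f\<in>greedy (filter P (takeWhile (\<lambda>x. x \<noteq> e) \<pi>)). e \<inter> f = {})"

lemma free_for_greedy_cong:
  assumes "\<And>f. f \<noteq> e \<Longrightarrow> P f = Q f"
  shows "free_for_greedy P \<pi> e = free_for_greedy Q \<pi> e"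
proof -
  have "P f = Q f" if "f \<in> set (takeWhile (\<lambda>x. x \<noteq> e) \<pi>)" for f
    using set_takeWhileD[OF that] assms by blast
  then have "filter P (takeWhile (\<lambda>x. x \<noteq> e) \<pi>) = filter Q (takeWhile (\<lambda>x. x \<noteq> e) \<pi>)"
    by (rule filter_cong[OF refl])
  then show ?thesis unfolding free_for_greedy_def by simp
qed

lemma greedy_contains_free_edge:
  assumes "e \<in> set \<pi>" "P e" "free_for_greedy P \<pi> e"
  shows "e \<in> greedy (filter P \<pi>)"
proof -
  define pre where "pre = takeWhile (\<lambda>x. x \<noteq> e) \<pi>"
  have ne: "dropWhile (\<lambda>x. x \<noteq> e) \<pi> \<noteq> []"
    using assms(1) by (simp add: dropWhile_eq_Nil_conv)
  then have "hd (dropWhile (\<lambda>x. x \<noteq> e) \<pi>) = e"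
    using hd_dropWhile by blast
  then obtain post where "dropWhile (\<lambda>x. x \<noteq> e) \<pi> = e # post"
    using ne by (cases "dropWhile (\<lambda>x. x \<noteq> e) \<pi>") auto
  then have \<pi>: "\<pi> = pre @ e # post"
    using takeWhile_dropWhile_id[of "\<lambda>x. x \<noteq> e" \<pi>] unfolding pre_def by simp
  define M where "M = greedy (filter P pre)"
  have "greedy_step M e = insert e M"
    using assms(3) unfolding free_for_greedy_def greedy_step_def M_def pre_def by auto
  then have "greedy (filter P \<pi>) = foldl greedy_step (insert e M) (filter P post)"
    using assms(2) unfolding \<pi> M_def greedy_eq_foldl_greedy_step by simp
  then show ?thesis using subset_foldl_greedy_step by blast
qed

lemma greedy_machine_bits:
  assumes "i < k"
  shows "greedy_machine E (\<lambda>e. {j\<in>{..<k}. B j e}) i \<rho> = greedy (filter (\<lambda>f. f \<in> E \<and> B i f) \<rho>)"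
  using assms unfolding greedy_machine_def cluster_edges_def by simp

lemma prob_free_edge_missing_from_H_le:
  assumes E: "finite E" "set \<pi> = E" and e: "e \<in> Mstar" "Mstar \<subseteq> E" and c: "2 \<le> c" "c \<le> k"
  shows "measure_pmf.prob (random_clustering E k c)
           {A. e \<in> free_edges E \<pi> Mstar A \<and> e \<notin> H_edges E k \<pi> A} \<le> 2 / real c"
proof -
  define q where "q = real c / real k"
  have q: "0 \<le> q" "q \<le> 1" using c unfolding q_def by auto
  define Q where "Q = Pi_pmf E False (\<lambda>_. bernoulli_pmf q)"
  define X where "X b \<longleftrightarrow> free_for_greedy (\<lambda>f. f \<in> E \<and> b f) \<pi> e" for b
  define S where "S i = (if i = 0 then {b. X b} else - {b. b e \<and> X b})" for i :: nat
  define p where "p = measure_pmf.prob Q {b. X b}"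
  have k: "0 < k" using c by simp
  have event: "(\<lambda>B e. {i\<in>{..<k}. B i e}) -` {A. e \<in> free_edges E \<pi> Mstar A \<and> e \<notin> H_edges E k \<pi> A}
      \<subseteq> Pi {..<k} S"
  proof
    fix B assume "B \<in> (\<lambda>B e. {i\<in>{..<k}. B i e}) -` {A. e \<in> free_edges E \<pi> Mstar A \<and> e \<notin> H_edges E k \<pi> A}"
    moreover have "greedy_machine E (\<lambda>e. {j. j < k \<and> B j e}) i \<rho> = greedy (filter (\<lambda>f. f \<in> E \<and> B i f) \<rho>)"
      if "i < k" for i \<rho>
      using greedy_machine_bits[OF that] by simp
    ultimately have free: "X (B 0)" and missing: "\<forall>i<k. e \<notin> greedy (filter (\<lambda>f. f \<in> E \<and> B i f) \<pi>)"
      using k by (auto simp: free_edges_def H_edges_def X_def free_for_greedy_def)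
    have "\<not> (B i e \<and> X (B i))" if "i < k" for i
      using greedy_contains_free_edge[of e \<pi> "\<lambda>f. f \<in> E \<and> B i f"] missing that E e
      unfolding X_def by auto
    then show "B \<in> Pi {..<k} S" using free unfolding S_def by auto
  qed
  have "measure_pmf.prob (random_clustering E k c)
          {A. e \<in> free_edges E \<pi> Mstar A \<and> e \<notin> H_edges E k \<pi> A}
      \<le> measure_pmf.prob (Pi_pmf {..<k} (\<lambda>_. False) (\<lambda>_. Q)) (Pi {..<k} S)"
    unfolding random_clustering_eq_bernoulli_machines[OF E(1) c(2)] Q_def q_def
    using event by (auto intro: measure_pmf.finite_measure_mono)
  also have "\<dots> = (\<Prod>i<k. measure_pmf.prob Q (S i))"
    by (rule measure_Pi_pmf_Pi) simp
  also have "\<dots> = p * (1 - q * p) ^ (k - 1)"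
  proof -
    have "X (b(e := y)) = X b" for b y
      unfolding X_def by (rule free_for_greedy_cong) simp
    then have "measure_pmf.prob Q {b. b e \<and> X b} = q * p"
      unfolding Q_def p_def using E e q by (intro prob_Pi_bernoulli_coordinate_and) auto
    then have "measure_pmf.prob Q (S (Suc i)) = 1 - q * p" for i
      using measure_pmf.prob_compl[of "{b. b e \<and> X b}" Q] by (simp add: S_def Compl_eq_Diff_UNIV)
    moreover obtain k' where k': "k = Suc k'" using k by (cases k) auto
    ultimately show ?thesis
      unfolding k' prod.lessThan_Suc_shift by (simp add: S_def p_def)
  qed
  also have "\<dots> \<le> 2 / real c"
    unfolding q_def p_def by (intro mult_one_minus_power_le_two_div c) auto
  finally show ?thesis .
qed

lemma expected_loss_le:
  assumes E: "finite E" "set \<pi> = E" and w: "\<forall>e\<in>E. 0 \<le> w e" and M: "Mstar \<subseteq> E"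
    and c: "2 \<le> c" "c \<le> k"
  shows "measure_pmf.expectation (random_clustering E k c) (\<lambda>A. wt w (free_edges E \<pi> Mstar A))
       - measure_pmf.expectation (random_clustering E k c)
           (\<lambda>A. wt w (free_edges E \<pi> Mstar A \<inter> H_edges E k \<pi> A))
       \<le> 2 / real c * wt w Mstar"
proof -
  let ?R = "random_clustering E k c" and ?F = "free_edges E \<pi> Mstar" and ?H = "H_edges E k \<pi>"
  have M_fin: "finite Mstar" using M E(1) by (rule finite_subset)
  have F_sub: "?F A \<subseteq> Mstar" for A by (auto simp: free_edges_def)
  have "measure_pmf.expectation ?R (\<lambda>A. wt w (?F A)) - measure_pmf.expectation ?R (\<lambda>A. wt w (?F A \<inter> ?H A))
      = (\<Sum>e\<in>Mstar. w e * (measure_pmf.prob ?R {A. e \<in> ?F A} - measure_pmf.prob ?R {A. e \<in> ?F A \<inter> ?H A}))"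
    using F_sub M_fin
    by (simp add: expectation_wt_eq_sum_prob le_infI1 right_diff_distrib sum_subtractf)
  also have "\<dots> = (\<Sum>e\<in>Mstar. w e * measure_pmf.prob ?R {A. e \<in> ?F A \<and> e \<notin> ?H A})"
    by (intro sum.cong refl arg_cong2[where f = "(*)"],
        subst measure_pmf.finite_measure_Diff[symmetric]) (auto intro: arg_cong[where f = "measure _"])
  also have "\<dots> \<le> (\<Sum>e\<in>Mstar. w e * (2 / real c))"
    using E w M c by (intro sum_mono mult_left_mono prob_free_edge_missing_from_H_le) auto
  also have "\<dots> = 2 / real c * wt w Mstar"
    unfolding wt_def sum_distrib_left by (simp only: mult.commute)
  finally show ?thesis .
qed

theorem lemma3p4:
  "\<exists>C::real. C > 0 \<and>
    (\<forall>(V::nat set) (E::nat set set) (w::nat set \<Rightarrow> real) (k::nat) (c::nat)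
        (\<pi>::nat set list) (Mstar::nat set set).
      simple_graph V E \<and> (\<forall>e\<in>E. w e \<ge> 0) \<and> 2 \<le> c \<and> c \<le> k \<and>
      distinct \<pi> \<and> set \<pi> = E \<and> sorted_wrt (\<lambda>e f. w e \<ge> w f) \<pi> \<and>
      Mstar \<subseteq> E \<and> is_matching Mstar \<and> wt w Mstar = opt E w
      \<longrightarrow>
      measure_pmf.expectation (random_clustering E k c)
          (\<lambda>A. wt w (free_edges E \<pi> Mstar A \<inter> H_edges E k \<pi> A))
        \<ge> measure_pmf.expectation (random_clustering E k c)
          (\<lambda>A. wt w (free_edges E \<pi> Mstar A))
          - C * (ln (real c) / real c) * opt E w)"
proof (intro exI[of _ "2 / ln 2"] conjI allI impI)
  fix V :: "nat set" and E :: "nat set set" and w :: "nat set \<Rightarrow> real" and k c :: nat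
    and \<pi> :: "nat set list" and Mstar :: "nat set set"
  assume H: "simple_graph V E \<and> (\<forall>e\<in>E. w e \<ge> 0) \<and> 2 \<le> c \<and> c \<le> k \<and>
      distinct \<pi> \<and> set \<pi> = E \<and> sorted_wrt (\<lambda>e f. w e \<ge> w f) \<pi> \<and>
      Mstar \<subseteq> E \<and> is_matching Mstar \<and> wt w Mstar = opt E w"
  then have "finite E"
    unfolding simple_graph_def by (meson Pow_iff finite_Pow_iff finite_subset subsetI)
  then have loss: "measure_pmf.expectation (random_clustering E k c) (\<lambda>A. wt w (free_edges E \<pi> Mstar A))
       - measure_pmf.expectation (random_clustering E k c)
           (\<lambda>A. wt w (free_edges E \<pi> Mstar A \<inter> H_edges E k \<pi> A))
       \<le> 2 / real c * opt E w"
    using H expected_loss_le[of E \<pi> w Mstar c k] by simp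
  have "0 \<le> opt E w"
    using H unfolding wt_def by (metis subsetD sum_nonneg)
  moreover have "2 / real c \<le> 2 / ln 2 * (ln (real c) / real c)"
    using H by (simp add: field_simps)
  ultimately have "2 / real c * opt E w \<le> 2 / ln 2 * (ln (real c) / real c) * opt E w"
    by (rule mult_right_mono[rotated])
  with loss show "measure_pmf.expectation (random_clustering E k c)
          (\<lambda>A. wt w (free_edges E \<pi> Mstar A \<inter> H_edges E k \<pi> A))
        \<ge> measure_pmf.expectation (random_clustering E k c) (\<lambda>A. wt w (free_edges E \<pi> Mstar A))
          - 2 / ln 2 * (ln (real c) / real c) * opt E w"
    by linarith
qed simp

end
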